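(* Let $\mu$ be a $\sigma$-finite signed measure on a measurable space $(\Omega,\mathcal B)$, and let $\Omega^+,\Omega^-$ be a Hahn decomposition for $\mu$ (disjoint measurable sets with union $\Omega$, $\mu\ge0$ on measurable subsets of $\Omega^+$, $\mu\le0$ on measurable subsets of $\Omega^-$). Writing $\operatorname{range}\lambda=\{\lambda(A):A\in\mathcal B\}$, we have $\operatorname{range}|\mu|=\operatorname{range}\mu-\mu(\Omega^-)$ if $\mu(\Omega^-)>-\infty$, and $\operatorname{range}|\mu|=-\operatorname{range}\mu+\mu(\Omega^+)$ if $\mu(\Omega^+)<+\infty$.
   Context: A $\sigma$-finite signed measure is a countably additive extended-real-valued set function vanishing on $\emptyset$, taking at most one of the values $\pm\infty$, whose total variation $|\mu|$ is $\sigma$-finite. For a set $S\subset\mathbb R\cup\{\pm\infty\}$ and real $c$, $S+c=\{s+c:s\in S\}$ and $-S=\{-s:s\in S\}$. *)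

theory Defs
  imports "HOL-Analysis.Analysis"
begin

text \<open>Signed measures on a measurable space M, given as set functions into the extended
reals (only their values on sets M matter).\<close>

definition countably_additive_signed :: "'a measure \<Rightarrow> ('a set \<Rightarrow> ereal) \<Rightarrow> bool" where
  "countably_additive_signed M \<mu> \<longleftrightarrow>
     (\<forall>A :: nat \<Rightarrow> 'a set. range A \<subseteq> sets M \<longrightarrow> disjoint_family A \<longrightarrow>
        (\<lambda>n. \<Sum>i<n. \<mu> (A i)) \<longlonglongrightarrow> \<mu> (\<Union>i. A i))"

definition signed_measure :: "'a measure \<Rightarrow> ('a set \<Rightarrow> ereal) \<Rightarrow> bool" where
  "signed_measure M \<mu> \<longleftrightarrow>
     \<mu> {} = 0 \<and>
     ((\<forall>A\<in>sets M. \<mu> A \<noteq> \<infinity>) \<or> (\<forall>A\<in>sets M. \<mu> A \<noteq> -\<infinity>)) \<and>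
     countably_additive_signed M \<mu>"

definition signed_total_variation :: "'a measure \<Rightarrow> ('a set \<Rightarrow> ereal) \<Rightarrow> 'a set \<Rightarrow> ereal" where
  "signed_total_variation M \<mu> A =
     Sup {(\<Sum>i<n. \<bar>\<mu> (E i)\<bar>) | (n::nat) E. (\<forall>i<n. E i \<in> sets M) \<and>
            disjoint_family_on E {..<n} \<and> (\<Union>i<n. E i) = A}"

definition sigma_finite_signed_measure :: "'a measure \<Rightarrow> ('a set \<Rightarrow> ereal) \<Rightarrow> bool" where
  "sigma_finite_signed_measure M \<mu> \<longleftrightarrow>
     signed_measure M \<mu> \<and>
     (\<exists>C :: nat \<Rightarrow> 'a set. range C \<subseteq> sets M \<and> (\<Union>i. C i) = space M \<and>
        (\<forall>i. signed_total_variation M \<mu> (C i) \<noteq> \<infinity>))"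

definition hahn_decomposition :: "'a measure \<Rightarrow> ('a set \<Rightarrow> ereal) \<Rightarrow> 'a set \<Rightarrow> 'a set \<Rightarrow> bool" where
  "hahn_decomposition M \<mu> P N \<longleftrightarrow>
     P \<in> sets M \<and> N \<in> sets M \<and> P \<inter> N = {} \<and> P \<union> N = space M \<and>
     (\<forall>A\<in>sets M. A \<subseteq> P \<longrightarrow> \<mu> A \<ge> 0) \<and>
     (\<forall>A\<in>sets M. A \<subseteq> N \<longrightarrow> \<mu> A \<le> 0)"

end

theory Submission
  imports Defs
begin

text \<open>With respect to the Hahn decomposition, \<open>|\<mu>|(A) = \<mu>(A \<inter> P) - \<mu>(A \<inter> N)\<close>. The map
\<open>A \<mapsto> (A \<inter> P) \<union> (N - A)\<close> is an involution of the \<sigma>-algebra, and when \<open>\<mu> N\<close> is finite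
it turns this formula into \<open>|\<mu>|(A) = \<mu>((A \<inter> P) \<union> (N - A)) - \<mu> N\<close>, which gives the first
identity.\<close>

lemma ereal_uminus_sum:
  fixes f :: "'b \<Rightarrow> ereal"
  assumes "\<And>i. i \<in> I \<Longrightarrow> f i \<noteq> \<infinity>"
  shows "- (\<Sum>i\<in>I. f i) = (\<Sum>i\<in>I. - f i)"
  using assms
proof (induction I rule: infinite_finite_induct)
  case (insert x F)
  have "f x \<noteq> \<infinity>" "(\<Sum>i\<in>F. f i) \<noteq> \<infinity>"
    using insert by (auto simp: sum_Pinfty)
  then have "- (f x + (\<Sum>i\<in>F. f i)) = - f x + - (\<Sum>i\<in>F. f i)"
    by (cases "f x"; cases "\<Sum>i\<in>F. f i") auto
  with insert show ?case by simp
qed simp_all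

lemma ereal_diff_add_right_cancel:
  fixes a b c :: ereal
  assumes "\<bar>b\<bar> \<noteq> \<infinity>" "\<bar>c\<bar> \<noteq> \<infinity>"
  shows "(a + c) - (b + c) = a - b"
  using assms by (cases a; cases b; cases c) auto

lemma signed_measure_uminus_sum:
  assumes "signed_measure M \<mu>" and "\<And>i. i \<in> I \<Longrightarrow> A i \<in> sets M"
  shows "- (\<Sum>i\<in>I. \<mu> (A i)) = (\<Sum>i\<in>I. - \<mu> (A i))"
proof -
  consider "\<forall>B\<in>sets M. \<mu> B \<noteq> \<infinity>" | "\<forall>B\<in>sets M. - \<mu> B \<noteq> \<infinity>"
    using assms(1) unfolding signed_measure_def by (metis ereal_uminus_eq_reorder)
  then show ?thesis
  proof cases
    case 1
    then show ?thesis using assms(2) by (intro ereal_uminus_sum) auto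
  next
    case 2
    then have "- (\<Sum>i\<in>I. - \<mu> (A i)) = (\<Sum>i\<in>I. \<mu> (A i))"
      using assms(2) by (subst ereal_uminus_sum) auto
    then show ?thesis by (metis ereal_uminus_uminus)
  qed
qed

lemma signed_measure_uminus:
  assumes "signed_measure M \<mu>"
  shows "signed_measure M (\<lambda>A. - \<mu> A)"
  unfolding signed_measure_def countably_additive_signed_def
proof (intro conjI allI impI)
  show "- \<mu> {} = 0" using assms by (simp add: signed_measure_def)
  show "(\<forall>A\<in>sets M. - \<mu> A \<noteq> \<infinity>) \<or> (\<forall>A\<in>sets M. - \<mu> A \<noteq> - \<infinity>)"
    using assms by (auto simp: signed_measure_def ereal_uminus_eq_reorder)
  fix A :: "nat \<Rightarrow> 'a set"
  assume A: "range A \<subseteq> sets M" "disjoint_family A"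
  then have "(\<lambda>n. - (\<Sum>i<n. \<mu> (A i))) \<longlonglongrightarrow> - \<mu> (\<Union>i. A i)"
    using assms by (auto simp: signed_measure_def countably_additive_signed_def)
  moreover have "- (\<Sum>i<n. \<mu> (A i)) = (\<Sum>i<n. - \<mu> (A i))" for n
    using A by (intro signed_measure_uminus_sum[OF assms]) auto
  ultimately show "(\<lambda>n. \<Sum>i<n. - \<mu> (A i)) \<longlonglongrightarrow> - \<mu> (\<Union>i. A i)" by simp
qed

lemma signed_measure_finite_Union:
  fixes E :: "nat \<Rightarrow> 'a set"
  assumes sm: "signed_measure M \<mu>" and E: "\<And>i. i < n \<Longrightarrow> E i \<in> sets M"
    and disj: "disjoint_family_on E {..<n}"
  shows "\<mu> (\<Union>i<n. E i) = (\<Sum>i<n. \<mu> (E i))"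
proof -
  define F where "F i = (if i < n then E i else {})" for i
  have "range F \<subseteq> sets M" "disjoint_family F"
    using E disj by (auto simp: F_def disjoint_family_on_def)
  then have "(\<lambda>m. \<Sum>i<m. \<mu> (F i)) \<longlonglongrightarrow> \<mu> (\<Union>i. F i)"
    using sm unfolding signed_measure_def countably_additive_signed_def by blast
  moreover have "(\<Sum>i<m. \<mu> (F i)) = (\<Sum>i<n. \<mu> (E i))" if "n \<le> m" for m
  proof -
    have "(\<Sum>i<m. \<mu> (F i)) = (\<Sum>i<n. \<mu> (F i))"
      using that sm by (intro sum.mono_neutral_right) (auto simp: F_def signed_measure_def)
    then show ?thesis by (simp add: F_def)
  qed
  then have "(\<lambda>m. \<Sum>i<m. \<mu> (F i)) \<longlonglongrightarrow> (\<Sum>i<n. \<mu> (E i))"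
    by (intro tendsto_eventually eventually_sequentiallyI)
  moreover have "(\<Union>i. F i) = (\<Union>i<n. E i)" by (auto simp: F_def split: if_splits)
  ultimately show ?thesis using LIMSEQ_unique by metis
qed

lemma signed_measure_Un:
  assumes sm: "signed_measure M \<mu>" and "A \<in> sets M" "B \<in> sets M" "A \<inter> B = {}"
  shows "\<mu> (A \<union> B) = \<mu> A + \<mu> B"
proof -
  define E where "E i = (if i = 0 then A else B)" for i :: nat
  have "\<mu> (\<Union>i<2. E i) = (\<Sum>i<2. \<mu> (E i))"
    using assms by (intro signed_measure_finite_Union) (auto simp: E_def disjoint_family_on_def)
  moreover have "(\<Union>i<2. E i) = A \<union> B" "(\<Sum>i<2. \<mu> (E i)) = \<mu> A + \<mu> B"
    unfolding E_def lessThan_nat_numeral by (auto simp: add.commute)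
  ultimately show ?thesis by simp
qed

lemma hahn_decomposition_uminus:
  "hahn_decomposition M \<mu> P N \<Longrightarrow> hahn_decomposition M (\<lambda>A. - \<mu> A) N P"
  by (auto simp: hahn_decomposition_def)

lemma signed_total_variation_uminus:
  "signed_total_variation M (\<lambda>A. - \<mu> A) = signed_total_variation M \<mu>"
  by (simp add: signed_total_variation_def fun_eq_iff)

context
  fixes M :: "'a measure" and \<mu> :: "'a set \<Rightarrow> ereal" and P N :: "'a set"
  assumes sm: "signed_measure M \<mu>" and hahn: "hahn_decomposition M \<mu> P N"
begin

lemma hahn_sets: "P \<in> sets M" "N \<in> sets M" "P \<inter> N = {}" "P \<union> N = space M"
  using hahn by (auto simp: hahn_decomposition_def)

lemma hahn_pos: "A \<in> sets M \<Longrightarrow> 0 \<le> \<mu> (A \<inter> P)"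
  using hahn by (auto simp: hahn_decomposition_def)

lemma hahn_neg: "A \<in> sets M \<Longrightarrow> \<mu> (A \<inter> N) \<le> 0"
  using hahn by (auto simp: hahn_decomposition_def)

lemma signed_measure_hahn_split:
  assumes A: "A \<in> sets M"
  shows "\<mu> A = \<mu> (A \<inter> P) + \<mu> (A \<inter> N)"
proof -
  have "\<mu> A = \<mu> ((A \<inter> P) \<union> (A \<inter> N))"
    using sets.sets_into_space[OF A] hahn_sets by (intro arg_cong[where f = \<mu>]) blast
  also have "\<dots> = \<mu> (A \<inter> P) + \<mu> (A \<inter> N)"
    using A hahn_sets by (intro signed_measure_Un[OF sm]) auto
  finally show ?thesis .
qed

lemma abs_signed_measure_le_hahn:
  assumes "A \<in> sets M"
  shows "\<bar>\<mu> A\<bar> \<le> \<mu> (A \<inter> P) - \<mu> (A \<inter> N)"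
  using signed_measure_hahn_split[OF assms] hahn_pos[OF assms] hahn_neg[OF assms]
  by (cases "\<mu> (A \<inter> P)"; cases "\<mu> (A \<inter> N)") auto

lemma signed_total_variation_hahn:
  assumes A: "A \<in> sets M"
  shows "signed_total_variation M \<mu> A = \<mu> (A \<inter> P) - \<mu> (A \<inter> N)"
  unfolding signed_total_variation_def
proof (rule Sup_eqI)
  fix y assume "y \<in> {(\<Sum>i<n. \<bar>\<mu> (E i)\<bar>) | (n::nat) E. (\<forall>i<n. E i \<in> sets M) \<and>
    disjoint_family_on E {..<n} \<and> (\<Union>i<n. E i) = A}"
  then obtain n :: nat and E where y: "y = (\<Sum>i<n. \<bar>\<mu> (E i)\<bar>)"
    and E: "\<And>i. i < n \<Longrightarrow> E i \<in> sets M" and disj: "disjoint_family_on E {..<n}"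
    and U: "(\<Union>i<n. E i) = A" by blast
  have disj_P: "disjoint_family_on (\<lambda>i. E i \<inter> P) {..<n}"
    and disj_N: "disjoint_family_on (\<lambda>i. E i \<inter> N) {..<n}"
    using disj by (auto simp: disjoint_family_on_def)
  have "y \<le> (\<Sum>i<n. \<mu> (E i \<inter> P) + - \<mu> (E i \<inter> N))"
    unfolding y using E abs_signed_measure_le_hahn by (intro sum_mono) (auto simp: minus_ereal_def)
  also have "\<dots> = (\<Sum>i<n. \<mu> (E i \<inter> P)) + (\<Sum>i<n. - \<mu> (E i \<inter> N))"
    by (rule sum.distrib)
  also have "(\<Sum>i<n. \<mu> (E i \<inter> P)) = \<mu> (\<Union>i<n. E i \<inter> P)"
    using E hahn_sets disj_P by (intro signed_measure_finite_Union[OF sm, symmetric]) auto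
  also have "(\<Sum>i<n. - \<mu> (E i \<inter> N)) = - \<mu> (\<Union>i<n. E i \<inter> N)"
    using E hahn_sets disj_N
    by (intro signed_measure_finite_Union[OF signed_measure_uminus[OF sm], symmetric]) auto
  also have "(\<Union>i<n. E i \<inter> P) = A \<inter> P" using U by blast
  also have "(\<Union>i<n. E i \<inter> N) = A \<inter> N" using U by blast
  finally show "y \<le> \<mu> (A \<inter> P) - \<mu> (A \<inter> N)" by (simp add: minus_ereal_def)
next
  fix y assume ub: "\<And>z. z \<in> {(\<Sum>i<n. \<bar>\<mu> (E i)\<bar>) | (n::nat) E. (\<forall>i<n. E i \<in> sets M) \<and>
    disjoint_family_on E {..<n} \<and> (\<Union>i<n. E i) = A} \<Longrightarrow> z \<le> y"
  define E where "E i = (if i = 0 then A \<inter> P else A \<inter> N)" for i :: nat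
  have "(\<Sum>i<2. \<bar>\<mu> (E i)\<bar>) \<le> y"
  proof (rule ub, intro CollectI exI conjI)
    show "\<forall>i<2. E i \<in> sets M" using A hahn_sets by (auto simp: E_def)
    show "disjoint_family_on E {..<2}" using hahn_sets by (auto simp: E_def disjoint_family_on_def)
    show "(\<Union>i<2. E i) = A"
      using sets.sets_into_space[OF A] hahn_sets unfolding E_def lessThan_nat_numeral by auto
  qed simp
  moreover have "(\<Sum>i<2. \<bar>\<mu> (E i)\<bar>) = \<mu> (A \<inter> P) - \<mu> (A \<inter> N)"
    using hahn_pos[OF A] hahn_neg[OF A] unfolding E_def lessThan_nat_numeral
    by (cases "\<mu> (A \<inter> P)"; cases "\<mu> (A \<inter> N)") (auto simp: add.commute)
  ultimately show "\<mu> (A \<inter> P) - \<mu> (A \<inter> N) \<le> y" by simp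
qed

lemma range_signed_total_variation_hahn:
  assumes fin: "\<mu> N > -\<infinity>"
  shows "signed_total_variation M \<mu> ` sets M = (\<lambda>x. x - \<mu> N) ` (\<mu> ` sets M)"
proof -
  define T where "T A = (A \<inter> P) \<union> (N - A)" for A
  have T_sets: "T A \<in> sets M" if "A \<in> sets M" for A
    using that hahn_sets by (auto simp: T_def)
  have T_T: "T (T A) = A" if "A \<in> sets M" for A
    using sets.sets_into_space[OF that] hahn_sets by (auto simp: T_def)
  have T_image: "T ` sets M = sets M"
  proof
    show "sets M \<subseteq> T ` sets M"
    proof
      fix A assume "A \<in> sets M"
      then show "A \<in> T ` sets M"
        using T_T T_sets by (intro image_eqI[of A T "T A"]) auto
    qed
  qed (use T_sets in blast)
  have "signed_total_variation M \<mu> A = \<mu> (T A) - \<mu> N" if A: "A \<in> sets M" for A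
  proof -
    have N_A: "N - A \<in> sets M" using A hahn_sets by auto
    have "\<mu> N = \<mu> ((A \<inter> N) \<union> (N - A))" by (intro arg_cong[where f = \<mu>]) blast
    also have "\<dots> = \<mu> (A \<inter> N) + \<mu> (N - A)"
      using A N_A hahn_sets by (intro signed_measure_Un[OF sm]) auto
    finally have split_N: "\<mu> N = \<mu> (A \<inter> N) + \<mu> (N - A)" .
    have "\<mu> (A \<inter> N) \<le> 0" "\<mu> (N - A) \<le> 0"
      using hahn_neg[OF A] hahn_neg[OF N_A] by (auto simp: Int_absorb2)
    with split_N fin have "\<bar>\<mu> (A \<inter> N)\<bar> \<noteq> \<infinity>" "\<bar>\<mu> (N - A)\<bar> \<noteq> \<infinity>"
      by auto
    then have "\<mu> (A \<inter> P) - \<mu> (A \<inter> N)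
        = (\<mu> (A \<inter> P) + \<mu> (N - A)) - (\<mu> (A \<inter> N) + \<mu> (N - A))"
      by (rule ereal_diff_add_right_cancel[symmetric])
    also have "\<mu> (A \<inter> P) + \<mu> (N - A) = \<mu> (T A)"
      unfolding T_def using A N_A hahn_sets by (intro signed_measure_Un[OF sm, symmetric]) auto
    finally show ?thesis using signed_total_variation_hahn[OF A] split_N by simp
  qed
  then have "signed_total_variation M \<mu> ` sets M = (\<lambda>A. \<mu> (T A) - \<mu> N) ` sets M"
    by (rule image_cong[OF refl])
  also have "\<dots> = (\<lambda>x. x - \<mu> N) ` (\<mu> ` (T ` sets M))" by (simp add: image_image)
  finally show ?thesis unfolding T_image .
qed

end

theorem lemma1p2:
  fixes M :: "'a measure" and \<mu> :: "'a set \<Rightarrow> ereal" and P N :: "'a set"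
  assumes "sigma_finite_signed_measure M \<mu>"
    and "hahn_decomposition M \<mu> P N"
  shows "(\<mu> N > -\<infinity> \<longrightarrow>
           signed_total_variation M \<mu> ` sets M = (\<lambda>x. x - \<mu> N) ` (\<mu> ` sets M)) \<and>
         (\<mu> P < \<infinity> \<longrightarrow>
           signed_total_variation M \<mu> ` sets M = (\<lambda>x. - x + \<mu> P) ` (\<mu> ` sets M))"
proof (intro conjI impI)
  have sm: "signed_measure M \<mu>"
    using assms(1) by (simp add: sigma_finite_signed_measure_def)
  show "signed_total_variation M \<mu> ` sets M = (\<lambda>x. x - \<mu> N) ` (\<mu> ` sets M)" if "\<mu> N > -\<infinity>"
    using range_signed_total_variation_hahn[OF sm assms(2) that] .
  assume "\<mu> P < \<infinity>"
  then have "- \<mu> P > -\<infinity>" by (cases "\<mu> P") auto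
  then have "signed_total_variation M (\<lambda>A. - \<mu> A) ` sets M
      = (\<lambda>x. x - - \<mu> P) ` ((\<lambda>A. - \<mu> A) ` sets M)"
    by (rule range_signed_total_variation_hahn[OF signed_measure_uminus[OF sm]
        hahn_decomposition_uminus[OF assms(2)]])
  then show "signed_total_variation M \<mu> ` sets M = (\<lambda>x. - x + \<mu> P) ` (\<mu> ` sets M)"
    by (simp add: signed_total_variation_uminus image_image)
qed

end
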